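(* Let $n\ge1$. (1) If $\mathrm{non}(\mathcal{N})>\mathrm{non}(\mathcal{M})$, then there exists a linear subspace of $\mathbb{R}^n$, considered as a vector space over $\mathbb{Q}$, which belongs to $\mathcal{N}\setminus\mathcal{M}$. (2) If $\mathrm{non}(\mathcal{M})>\mathrm{non}(\mathcal{N})$, then there exists a linear subspace of $\mathbb{R}^n$ over $\mathbb{Q}$ which belongs to $\mathcal{M}\setminus\mathcal{N}$.
   Context: $\mathcal{N}$ is the $\sigma$-ideal of Lebesgue null subsets of $\mathbb{R}^n$, and $\mathcal{M}$ is the $\sigma$-ideal of meager subsets of $\mathbb{R}^n$. For an ideal $\mathcal{I}$, $\mathrm{non}(\mathcal{I})=\min\{|A|:A\subseteq\mathbb{R}^n,\ A\notin\mathcal{I}\}$. *)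

theory Defs
  imports "HOL-Analysis.Analysis"
begin

definition nowhere_dense :: "'a::topological_space set \<Rightarrow> bool" where
  "nowhere_dense S \<longleftrightarrow> interior (closure S) = {}"

definition meager_sets :: "'a::topological_space set set" where
  "meager_sets = {A. \<exists>F. countable F \<and> (\<forall>S\<in>F. nowhere_dense S) \<and> A \<subseteq> \<Union>F}"

definition null_sets_leb :: "'a::euclidean_space set set" where
  "null_sets_leb = null_sets lebesgue"

text \<open>The uniformity non(I): the least cardinality of a set not in I,
  as a cardinal (well-order up to =o). It is the cardinality of a
  non-member A of I of minimal cardinality.\<close>
definition non_card :: "'a set set \<Rightarrow> 'a rel" where
  "non_card I = card_of (SOME A. A \<notin> I \<and> (\<forall>B. B \<notin> I \<longrightarrow> (card_of A, card_of B) \<in> ordLeq))"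

definition rat_subspace :: "'a::real_vector set \<Rightarrow> bool" where
  "rat_subspace V \<longleftrightarrow> 0 \<in> V \<and> (\<forall>x\<in>V. \<forall>y\<in>V. x + y \<in> V)
     \<and> (\<forall>q\<in>\<rat>. \<forall>x\<in>V. q *\<^sub>R x \<in> V)"

end

theory Submission
  imports Defs
begin

text \<open>Let \<open>I\<close> and \<open>J\<close> be ideals of subsets of a real vector space that contain all finite sets,
  with \<open>non(I) < non(J)\<close>. Take \<open>A \<notin> I\<close> with \<open>|A| = non(I)\<close>; then \<open>A\<close> is infinite, so its
  \<open>\<rat>\<close>-linear span has cardinality \<open>|A|\<close> as well. Being smaller than \<open>non(J)\<close>, the span lies
  in \<open>J\<close>, and it is not in \<open>I\<close> because it contains \<open>A\<close>. Both \<open>\<N>\<close> and \<open>\<M>\<close> are such ideals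
  on \<open>\<real>\<^sup>n\<close>, and neither contains \<open>\<real>\<^sup>n\<close> (the latter by the Baire category theorem).\<close>

unbundle cardinal_syntax

lemma non_card_witness:
  assumes "\<exists>A. A \<notin> I"
  obtains A where "non_card I = |A|" "A \<notin> I" "\<And>B. B \<notin> I \<Longrightarrow> |A| \<le>o |B|"
proof -
  let ?R = "{ |B| | B. B \<notin> I}"
  have "\<exists>r\<in>?R. \<forall>r'\<in>?R. r \<le>o r'"
    using assms by (intro exists_minim_Well_order) (auto simp: card_of_Well_order)
  then have "\<exists>A. A \<notin> I \<and> (\<forall>B. B \<notin> I \<longrightarrow> |A| \<le>o |B| )"
    by blast
  from someI_ex[OF this] show ?thesis
    by (intro that) (auto simp: non_card_def)
qed

lemma mem_if_card_of_ordLess_non_card: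
  assumes "\<exists>A. A \<notin> I" and "|B| <o non_card I"
  shows "B \<in> I"
proof (rule ccontr)
  assume "B \<notin> I"
  obtain A where "non_card I = |A|" "|A| \<le>o |B|"
    using non_card_witness[OF assms(1)] \<open>B \<notin> I\<close> by metis
  then show False
    using assms(2) not_ordLess_ordLeq by metis
qed

fun rat_combinations :: "'a::real_vector set \<Rightarrow> nat \<Rightarrow> 'a set" where
  "rat_combinations A 0 = {0}"
| "rat_combinations A (Suc n) =
     (\<lambda>(v, q, a). v + of_rat q *\<^sub>R a) ` (rat_combinations A n \<times> UNIV \<times> A)"

definition rat_span :: "'a::real_vector set \<Rightarrow> 'a set" where
  "rat_span A = (\<Union>n. rat_combinations A n)"

lemma rat_combinations_add:
  "x \<in> rat_combinations A n \<Longrightarrow> y \<in> rat_combinations A m \<Longrightarrow> x + y \<in> rat_combinations A (n + m)"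
proof (induction m arbitrary: y)
  case 0
  then show ?case by simp
next
  case (Suc m)
  then obtain v q a where "v \<in> rat_combinations A m" "a \<in> A" "y = v + of_rat q *\<^sub>R a"
    by auto
  with Suc.IH[OF Suc.prems(1) this(1)] show ?case
    by (force simp: add.assoc intro!: image_eqI[where x = "(x + v, q, a)"])
qed

lemma rat_combinations_scaleR:
  "x \<in> rat_combinations A n \<Longrightarrow> of_rat r *\<^sub>R x \<in> rat_combinations A n"
proof (induction n arbitrary: x)
  case 0
  then show ?case by simp
next
  case (Suc n)
  then obtain v q a where "v \<in> rat_combinations A n" "a \<in> A" "x = v + of_rat q *\<^sub>R a"
    by auto
  with Suc.IH[OF this(1)] show ?case
    by (force simp: scaleR_add_right of_rat_mult
              intro!: image_eqI[where x = "(of_rat r *\<^sub>R v, r * q, a)"])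
qed

lemma rat_subspace_rat_span: "rat_subspace (rat_span A)"
  unfolding rat_subspace_def rat_span_def
proof (intro conjI ballI)
  show "0 \<in> (\<Union>n. rat_combinations A n)"
    using rat_combinations.simps(1) by blast
next
  fix x y
  assume "x \<in> (\<Union>n. rat_combinations A n)" "y \<in> (\<Union>n. rat_combinations A n)"
  then show "x + y \<in> (\<Union>n. rat_combinations A n)"
    using rat_combinations_add by blast
next
  fix q :: real and x
  assume "q \<in> \<rat>" "x \<in> (\<Union>n. rat_combinations A n)"
  moreover from \<open>q \<in> \<rat>\<close> obtain r where "q = of_rat r"
    by (auto elim: Rats_cases)
  ultimately show "q *\<^sub>R x \<in> (\<Union>n. rat_combinations A n)"
    using rat_combinations_scaleR by blast
qed

lemma subset_rat_span: "A \<subseteq> rat_span A"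
proof
  fix a
  assume "a \<in> A"
  then have "a \<in> rat_combinations A 1"
    by (auto intro!: image_eqI[where x = "(0, 1, a)"])
  then show "a \<in> rat_span A"
    unfolding rat_span_def by blast
qed

lemma card_of_rat_span_ordLeq:
  assumes "infinite A"
  shows "|rat_span A| \<le>o |A|"
proof -
  have nat: "|UNIV :: nat set| \<le>o |A|"
    using assms infinite_iff_card_of_nat by blast
  have "|UNIV :: rat set| \<le>o |UNIV :: nat set|"
    using card_of_ordLeq[of "UNIV :: rat set" "UNIV :: nat set"] inj_to_nat by blast
  then have "|UNIV :: rat set| \<le>o |A|"
    using nat ordLeq_transitive by blast
  then have rat_times: "|(UNIV :: rat set) \<times> A| \<le>o |A|"
    by (intro card_of_Times_ordLeq_infinite_Field)
       (auto simp: Field_card_of card_of_card_order_on assms card_of_mono1)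
  have "|rat_combinations A n| \<le>o |A|" for n
  proof (induction n)
    case 0
    have "A \<noteq> {}"
      using assms by auto
    then show ?case
      by (simp add: card_of_singl_ordLeq)
  next
    case (Suc n)
    have "|rat_combinations A n \<times> (UNIV :: rat set) \<times> A| \<le>o |A|"
      using card_of_Times_ordLeq_infinite_Field[OF _ Suc rat_times card_of_Card_order] assms
      by (simp add: Field_card_of)
    then show ?case
      using card_of_image ordLeq_transitive by (metis rat_combinations.simps(2))
  qed
  then show ?thesis
    unfolding rat_span_def using card_of_UNION_ordLeq_infinite[OF assms, of UNIV] nat by blast
qed

lemma ex_rat_subspace_if_non_card_less:
  fixes I J :: "'a::real_vector set set"
  assumes I_proper: "\<exists>A. A \<notin> I" and J_proper: "\<exists>A. A \<notin> J"
    and finite_in_I: "\<And>B. finite B \<Longrightarrow> B \<in> I"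
    and I_downward: "\<And>B C. B \<in> I \<Longrightarrow> C \<subseteq> B \<Longrightarrow> C \<in> I"
    and less: "non_card I <o non_card J"
  shows "\<exists>V. rat_subspace V \<and> V \<in> J \<and> V \<notin> I"
proof -
  obtain A where A: "non_card I = |A|" "A \<notin> I"
    by (rule non_card_witness[OF I_proper]) simp
  then have "infinite A"
    using finite_in_I by blast
  then have "|rat_span A| \<le>o |A|"
    by (rule card_of_rat_span_ordLeq)
  moreover have "|A| <o non_card J"
    using less A(1) by simp
  ultimately have "|rat_span A| <o non_card J"
    by (rule ordLeq_ordLess_trans)
  then have "rat_span A \<in> J"
    using mem_if_card_of_ordLess_non_card[OF J_proper] by blast
  moreover have "rat_span A \<notin> I"
    using I_downward subset_rat_span A(2) by blast
  ultimately show ?thesis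
    using rat_subspace_rat_span by blast
qed

lemma meager_sets_subset:
  assumes "B \<in> meager_sets" "C \<subseteq> B"
  shows "C \<in> meager_sets"
proof -
  obtain F where "countable F" "\<forall>S\<in>F. nowhere_dense S" "B \<subseteq> \<Union>F"
    using assms(1) unfolding meager_sets_def by blast
  with assms(2) show ?thesis
    unfolding meager_sets_def by blast
qed

lemma finite_in_meager_sets:
  fixes B :: "'a::{t1_space, perfect_space} set"
  assumes "finite B"
  shows "B \<in> meager_sets"
  unfolding meager_sets_def
proof (intro CollectI exI conjI)
  show "countable ((\<lambda>x. {x}) ` B)"
    using assms by (simp add: countable_finite)
  show "\<forall>S\<in>(\<lambda>x. {x}) ` B. nowhere_dense S"
    by (auto simp: nowhere_dense_def)
qed auto

lemma UNIV_not_in_meager_sets: "(UNIV :: 'a::complete_space set) \<notin> meager_sets"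
proof
  assume "(UNIV :: 'a set) \<in> meager_sets"
  then obtain F :: "'a set set" where F: "countable F" "\<And>S. S \<in> F \<Longrightarrow> nowhere_dense S" "UNIV \<subseteq> \<Union>F"
    unfolding meager_sets_def by blast
  have "euclidean interior_of \<Union>(closure ` F) = {}"
  proof (rule Baire_category_alt)
    show "completely_metrizable_space (euclidean :: 'a topology) \<or>
          locally_compact_space (euclidean :: 'a topology) \<and> regular_space (euclidean :: 'a topology)"
      using completely_metrizable_space_euclidean by blast
    show "countable (closure ` F)"
      using F(1) by blast
    show "closedin euclidean T \<and> euclidean interior_of T = {}" if "T \<in> closure ` F" for T
      using that F(2) by (auto simp: nowhere_dense_def)
  qed
  moreover have "\<Union>(closure ` F) = UNIV"
    using F(3) closure_subset by blast
  ultimately show False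
    by simp
qed

lemma null_sets_leb_subset: "B \<in> null_sets_leb \<Longrightarrow> C \<subseteq> B \<Longrightarrow> C \<in> null_sets_leb"
  unfolding null_sets_leb_def using negligible_subset negligible_iff_null_sets by metis

lemma finite_in_null_sets_leb: "finite B \<Longrightarrow> B \<in> null_sets_leb"
  unfolding null_sets_leb_def using negligible_finite negligible_iff_null_sets by metis

lemma UNIV_not_in_null_sets_leb: "(UNIV :: 'a::euclidean_space set) \<notin> null_sets_leb"
  unfolding null_sets_leb_def using non_negligible_UNIV negligible_iff_null_sets by metis

theorem theorem2p3:
  shows "((non_card (meager_sets :: (real^'n) set set), non_card (null_sets_leb :: (real^'n) set set)) \<in> ordLess
           \<longrightarrow> (\<exists>V :: (real^'n) set. rat_subspace V \<and> V \<in> null_sets_leb \<and> V \<notin> meager_sets))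
       \<and> ((non_card (null_sets_leb :: (real^'n) set set), non_card (meager_sets :: (real^'n) set set)) \<in> ordLess
           \<longrightarrow> (\<exists>V :: (real^'n) set. rat_subspace V \<and> V \<in> meager_sets \<and> V \<notin> null_sets_leb))"
proof (intro conjI impI)
  have M: "\<exists>A. A \<notin> (meager_sets :: (real^'n) set set)"
    using UNIV_not_in_meager_sets by (rule exI)
  have N: "\<exists>A. A \<notin> (null_sets_leb :: (real^'n) set set)"
    using UNIV_not_in_null_sets_leb by (rule exI)
  show "\<exists>V :: (real^'n) set. rat_subspace V \<and> V \<in> null_sets_leb \<and> V \<notin> meager_sets"
    if "non_card (meager_sets :: (real^'n) set set) <o non_card (null_sets_leb :: (real^'n) set set)"
    by (rule ex_rat_subspace_if_non_card_less[OF M N finite_in_meager_sets meager_sets_subset that])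
  show "\<exists>V :: (real^'n) set. rat_subspace V \<and> V \<in> meager_sets \<and> V \<notin> null_sets_leb"
    if "non_card (null_sets_leb :: (real^'n) set set) <o non_card (meager_sets :: (real^'n) set set)"
    by (rule ex_rat_subspace_if_non_card_less[OF N M finite_in_null_sets_leb null_sets_leb_subset that])
qed

end
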